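(* Let $s\geq1$ and consider an explicit $s$-stage Runge–Kutta method in Shu–Osher form with coefficients $a_{i,k}\geq 0$, $b_{i,k}\geq 0$ ($1\leq i\leq s$, $0\leq k\leq i-1$), satisfying $\sum_{k=0}^{i-1}a_{i,k}=1$ for each $i$. Apply it to $dy/dt=T^{(1)}_\lambda(\alpha,\Delta t)\lambda y$, i.e. $y^{(0)}=y^n$, $y^{(i)}=\sum_{k=0}^{i-1}\left(a_{i,k}y^{(k)}+\Delta t\, b_{i,k}T^{(1)}_\lambda(\alpha,\Delta t)\lambda y^{(k)}\right)$ for $i=1,\dots,s$, $y^{n+1}=y^{(s)}$, where $T^{(1)}_\lambda(\alpha,\Delta t)=(1-\alpha\Delta t\lambda)^{-1}$ and $\alpha>0$. If $\alpha\geq 0.5\,\max_{i,k}(b_{i,k}/a_{i,k})$, then the integration is unconditionally stable: $|y^{n+1}|\leq|y^n|$ for every $\Delta t>0$, every $\lambda\in\mathbb{C}$ with $\mathrm{Re}(\lambda)\leq0$, and every $y^n\in\mathbb{C}$.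
   Context: In the maximum, the ratio $b_{i,k}/a_{i,k}$ is understood as $0$ when $b_{i,k}=0$ and as $+\infty$ when $a_{i,k}=0<b_{i,k}$. *)

theory Defs
  imports "HOL-Analysis.Analysis" "HOL-Library.Extended_Real"
begin

definition T1 :: "real \<Rightarrow> real \<Rightarrow> complex \<Rightarrow> complex" where
  "T1 \<alpha> dt lam = inverse (1 - complex_of_real (\<alpha> * dt) * lam)"

definition so_ratio :: "real \<Rightarrow> real \<Rightarrow> ereal" where
  "so_ratio b a = (if b = 0 then 0 else if a = 0 then \<infinity> else ereal (b / a))"

end

theory Submission
  imports Defs
begin

text \<open>Stage \<open>i\<close> is \<open>y\<^sub>i = \<Sum>\<^sub>k c\<^sub>i\<^sub>k y\<^sub>k\<close> with \<open>c\<^sub>i\<^sub>k = a\<^sub>i\<^sub>k + b\<^sub>i\<^sub>k z / (1 - \<alpha> z)\<close>, \<open>z = \<Delta>t \<lambda>\<close>.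
  A direct computation gives
  \<open>a\<^sup>2 |1 - \<alpha> z|\<^sup>2 - |a (1 - \<alpha> z) + b z|\<^sup>2 = -2 a b Re z + b (2 \<alpha> a - b) |z|\<^sup>2\<close>,
  which is nonnegative for \<open>Re z \<le> 0\<close> as soon as \<open>b \<le> 2 \<alpha> a\<close>; so \<open>|c\<^sub>i\<^sub>k| \<le> a\<^sub>i\<^sub>k\<close>,
  and since the \<open>a\<^sub>i\<^sub>k\<close> are convex weights, induction over the stages gives
  \<open>|y\<^sub>i| \<le> |y\<^sup>n|\<close>.\<close>

lemma norm_stage_numerator_le:
  fixes a b \<alpha> :: real and z :: complex
  assumes "a \<ge> 0" "b \<ge> 0" "b \<le> 2 * \<alpha> * a" "Re z \<le> 0"
  shows "cmod (of_real a * (1 - of_real \<alpha> * z) + of_real b * z) \<le> a * cmod (1 - of_real \<alpha> * z)"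
proof -
  obtain x w where z: "z = Complex x w" by (cases z)
  have "x \<le> 0" using assms(4) z by simp
  have numerator: "(cmod (of_real a * (1 - of_real \<alpha> * z) + of_real b * z))\<^sup>2
      = (a + (b - a * \<alpha>) * x)\<^sup>2 + ((b - a * \<alpha>) * w)\<^sup>2"
    unfolding cmod_power2 z by (simp add: power2_eq_square algebra_simps)
  have denominator: "(a * cmod (1 - of_real \<alpha> * z))\<^sup>2 = a\<^sup>2 * ((1 - \<alpha> * x)\<^sup>2 + (\<alpha> * w)\<^sup>2)"
    unfolding power_mult_distrib cmod_power2 z by (simp add: power2_eq_square algebra_simps)
  have "a\<^sup>2 * ((1 - \<alpha> * x)\<^sup>2 + (\<alpha> * w)\<^sup>2) - ((a + (b - a * \<alpha>) * x)\<^sup>2 + ((b - a * \<alpha>) * w)\<^sup>2)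
      = 2 * (a * b) * (- x) + b * (2 * \<alpha> * a - b) * (x\<^sup>2 + w\<^sup>2)"
    by (simp add: power2_eq_square algebra_simps)
  also have "\<dots> \<ge> 0"
    using assms(1-3) \<open>x \<le> 0\<close> by (intro add_nonneg_nonneg mult_nonneg_nonneg) auto
  finally have "(cmod (of_real a * (1 - of_real \<alpha> * z) + of_real b * z))\<^sup>2
      \<le> (a * cmod (1 - of_real \<alpha> * z))\<^sup>2"
    unfolding numerator denominator by linarith
  then show ?thesis
    by (rule power2_le_imp_le) (simp add: assms(1))
qed

lemma norm_stage_factor_le:
  fixes a b \<alpha> dt :: real and lam :: complex
  assumes "a \<ge> 0" "b \<ge> 0" "\<alpha> > 0" "b \<le> 2 * \<alpha> * a" "dt > 0" "Re lam \<le> 0"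
  shows "cmod (of_real a + of_real (dt * b) * T1 \<alpha> dt lam * lam) \<le> a"
proof -
  define z where "z = complex_of_real dt * lam"
  have "Re z \<le> 0" using assms(5,6) by (simp add: z_def mult_nonneg_nonpos)
  have nonzero: "1 - of_real \<alpha> * z \<noteq> 0"
  proof
    assume "1 - of_real \<alpha> * z = 0"
    then have "Re (1 - of_real \<alpha> * z) = 0" by simp
    then show False
      using assms(3) \<open>Re z \<le> 0\<close> mult_nonneg_nonpos[of \<alpha> "Re z"] by simp
  qed
  have "of_real a + of_real (dt * b) * T1 \<alpha> dt lam * lam
      = (of_real a * (1 - of_real \<alpha> * z) + of_real b * z) / (1 - of_real \<alpha> * z)"
    using nonzero unfolding T1_def z_def by (simp add: field_simps)
  then show ?thesis
    using norm_stage_numerator_le[OF assms(1,2,4) \<open>Re z \<le> 0\<close>] nonzero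
    by (simp add: norm_divide divide_le_eq)
qed

lemma le_twice_mult_if_half_so_ratio_le:
  fixes a b \<alpha> :: real
  assumes "a \<ge> 0" "\<alpha> > 0" "ereal (1/2) * so_ratio b a \<le> ereal \<alpha>"
  shows "b \<le> 2 * \<alpha> * a"
proof (cases "b = 0")
  case True
  then show ?thesis using assms(1,2) by simp
next
  case False
  then have "a \<noteq> 0" using assms(3) by (auto simp: so_ratio_def)
  with False assms(3) have "b / a / 2 \<le> \<alpha>" by (simp add: so_ratio_def)
  then show ?thesis using assms(1) \<open>a \<noteq> 0\<close> by (simp add: field_simps)
qed

lemma norm_explicit_stages_le:
  fixes y :: "nat \<Rightarrow> 'v::real_normed_algebra" and c :: "nat \<Rightarrow> nat \<Rightarrow> 'v"
    and a :: "nat \<Rightarrow> nat \<Rightarrow> real"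
  assumes stages: "\<And>i. 1 \<le> i \<Longrightarrow> i \<le> s \<Longrightarrow> y i = (\<Sum>k<i. c i k * y k)"
    and norm_c: "\<And>i k. 1 \<le> i \<Longrightarrow> i \<le> s \<Longrightarrow> k < i \<Longrightarrow> norm (c i k) \<le> a i k"
    and a_sum: "\<And>i. 1 \<le> i \<Longrightarrow> i \<le> s \<Longrightarrow> (\<Sum>k<i. a i k) = 1"
    and "i \<le> s"
  shows "norm (y i) \<le> norm (y 0)"
  using \<open>i \<le> s\<close>
proof (induction i rule: less_induct)
  case (less i)
  show ?case
  proof (cases "i = 0")
    case False
    then have "1 \<le> i" by simp
    have "norm (y i) \<le> (\<Sum>k<i. norm (c i k * y k))"
      unfolding stages[OF \<open>1 \<le> i\<close> less.prems] by (rule norm_sum)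
    also have "\<dots> \<le> (\<Sum>k<i. a i k * norm (y 0))"
    proof (rule sum_mono)
      fix k assume "k \<in> {..<i}"
      then have "norm (c i k) \<le> a i k" "norm (y k) \<le> norm (y 0)"
        using \<open>1 \<le> i\<close> less norm_c by auto
      then show "norm (c i k * y k) \<le> a i k * norm (y 0)"
        by (meson norm_mult_ineq mult_mono norm_ge_zero order_trans)
    qed
    also have "\<dots> = norm (y 0)"
      using a_sum[OF \<open>1 \<le> i\<close> less.prems] by (simp add: sum_distrib_right[symmetric])
    finally show ?thesis .
  qed simp
qed

theorem theorem2:
  fixes s :: nat and a b :: "nat \<Rightarrow> nat \<Rightarrow> real" and \<alpha> dt :: real
    and lam yn :: complex and y :: "nat \<Rightarrow> complex"
  assumes "s \<ge> 1"
    and a_nonneg: "\<And>i k. 1 \<le> i \<Longrightarrow> i \<le> s \<Longrightarrow> k < i \<Longrightarrow> a i k \<ge> 0"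
    and b_nonneg: "\<And>i k. 1 \<le> i \<Longrightarrow> i \<le> s \<Longrightarrow> k < i \<Longrightarrow> b i k \<ge> 0"
    and a_sum: "\<And>i. 1 \<le> i \<Longrightarrow> i \<le> s \<Longrightarrow> (\<Sum>k<i. a i k) = 1"
    and alpha_pos: "\<alpha> > 0"
    and alpha_bound: "ereal \<alpha> \<ge> ereal (1/2) *
        Max {so_ratio (b i k) (a i k) | i k. 1 \<le> i \<and> i \<le> s \<and> k < i}"
    and dt_pos: "dt > 0"
    and lambda: "Re lam \<le> 0"
    and y0: "y 0 = yn"
    and stages: "\<And>i. 1 \<le> i \<Longrightarrow> i \<le> s \<Longrightarrow>
        y i = (\<Sum>k<i. complex_of_real (a i k) * y k
               + complex_of_real (dt * b i k) * T1 \<alpha> dt lam * lam * y k)"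
  shows "cmod (y s) \<le> cmod yn"
proof -
  let ?ratios = "{so_ratio (b i k) (a i k) | i k. 1 \<le> i \<and> i \<le> s \<and> k < i}"
  have "?ratios \<subseteq> (\<lambda>(i, k). so_ratio (b i k) (a i k)) ` ({1..s} \<times> {..<s})"
    by auto
  then have "finite ?ratios" by (rule finite_subset) simp
  have b_le: "b i k \<le> 2 * \<alpha> * a i k" if "1 \<le> i" "i \<le> s" "k < i" for i k
  proof (rule le_twice_mult_if_half_so_ratio_le[OF a_nonneg[OF that] alpha_pos])
    have "so_ratio (b i k) (a i k) \<le> Max ?ratios"
      using \<open>finite ?ratios\<close> that by (intro Max_ge) blast+
    then have "ereal (1/2) * so_ratio (b i k) (a i k) \<le> ereal (1/2) * Max ?ratios"
      by (rule ereal_mult_left_mono) simp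
    then show "ereal (1/2) * so_ratio (b i k) (a i k) \<le> ereal \<alpha>"
      using alpha_bound by (rule order_trans)
  qed
  let ?c = "\<lambda>i k. complex_of_real (a i k) + complex_of_real (dt * b i k) * T1 \<alpha> dt lam * lam"
  have "cmod (y s) \<le> cmod (y 0)"
  proof (rule norm_explicit_stages_le[where c = ?c and a = a])
    show "y i = (\<Sum>k<i. ?c i k * y k)" if "1 \<le> i" "i \<le> s" for i
      using stages[OF that] by (simp add: distrib_right)
    show "cmod (?c i k) \<le> a i k" if "1 \<le> i" "i \<le> s" "k < i" for i k
      using that by (intro norm_stage_factor_le a_nonneg b_nonneg b_le alpha_pos dt_pos lambda)
  qed (use a_sum in auto)
  then show ?thesis using y0 by simp
qed

end
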